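(* Let $\Delta=\Delta(f)$ be a positive integer and $\lambda=\lambda(f)>0$ a real number, both depending on a real parameter $f$, such that $f\le \Delta^2+1$ and, as $f\to\infty$, \[ \Delta\log(1+\lambda)\to\infty \quad\text{ and }\quad \frac{2(\Delta\log(1+\lambda))^2}{f\,W(\Delta\log(1+\lambda))}\to 0\,. \] Then there is a function $\delta(f)\to 0$ as $f\to\infty$ such that for every such $f$ and every graph $G$ of maximum degree $\Delta$ in which the neighbourhood of every vertex spans at most $\Delta^2/f$ edges, writing $\mathbf{I}$ for the random independent set from the hard-core model on $G$ at fugacity $\lambda$, \[ \frac{1}{|V(G)|}\mathbb{E}|\mathbf{I}| \ge (1+\delta(f))\frac{\lambda}{1+\lambda}\cdot\frac{W(\Delta\log(1+\lambda))}{\Delta\log(1+\lambda)}\,. \]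
   Context: $\log$ is the natural logarithm. $W:[-1/e,\infty)\to[-1,\infty)$ is the Lambert $W$ function, the inverse of $z\mapsto ze^z$. For a graph $G$ with set $\mathcal{I}(G)$ of independent sets (including the empty set) and $\lambda>0$, the hard-core model on $G$ at fugacity $\lambda$ is the probability distribution on $\mathcal{I}(G)$ with $\Pr(\mathbf{I}=I)=\lambda^{|I|}/Z_G(\lambda)$, where $Z_G(\lambda)=\sum_{I\in\mathcal{I}(G)}\lambda^{|I|}$. "The neighbourhood of a vertex $v$ spans at most $m$ edges" means the subgraph induced by $N(v)$ has at most $m$ edges. *)

theory Defs
  imports Complex_Main
begin

definition lambertW :: "real \<Rightarrow> real" where
  "lambertW x = (THE w. w \<ge> -1 \<and> w * exp w = x)"

definition simple_graph :: "'a set \<Rightarrow> 'a set set \<Rightarrow> bool" where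
  "simple_graph V E \<longleftrightarrow> finite V \<and>
     (\<forall>e\<in>E. \<exists>u v. u \<noteq> v \<and> u \<in> V \<and> v \<in> V \<and> e = {u, v})"

definition neighbours :: "'a set set \<Rightarrow> 'a \<Rightarrow> 'a set" where
  "neighbours E v = {u. {u, v} \<in> E}"

definition degree :: "'a set set \<Rightarrow> 'a \<Rightarrow> nat" where
  "degree E v = card (neighbours E v)"

definition nbhd_edges :: "'a set set \<Rightarrow> 'a \<Rightarrow> nat" where
  "nbhd_edges E v = card {e \<in> E. e \<subseteq> neighbours E v}"

definition indep_sets :: "'a set \<Rightarrow> 'a set set \<Rightarrow> 'a set set" where
  "indep_sets V E = {I. I \<subseteq> V \<and> (\<forall>u\<in>I. \<forall>v\<in>I. {u, v} \<notin> E)}"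

definition hardcore_Z :: "'a set \<Rightarrow> 'a set set \<Rightarrow> real \<Rightarrow> real" where
  "hardcore_Z V E lam = (\<Sum>I\<in>indep_sets V E. lam ^ card I)"

definition hardcore_expected_size :: "'a set \<Rightarrow> 'a set set \<Rightarrow> real \<Rightarrow> real" where
  "hardcore_expected_size V E lam =
     (\<Sum>I\<in>indep_sets V E. real (card I) * (lam ^ card I / hardcore_Z V E lam))"

end

theory Submission
  imports Defs
begin

(* Fix a vertex v and split a hard-core sample I into T = I - N(v) and S = I \<inter> N(v).
   Given T, the set S is a hard-core sample on the set Y of neighbours of v having no
   neighbour in T. Hence Pr(v \<in> I) = lam/(1+lam) E[1/Z_Y], and by convexity of exp,
   1/Z_Y \<ge> (1+lam)^-|Y| \<ge> exp(-W) (1 + W - |Y| log(1+lam)) for every real W. On the other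
   hand every u \<in> Y is occupied with probability at least lam/(1+lam) (1 - lam/(1+lam) deg_Y u),
   so E|S| \<ge> lam/(1+lam) (|Y| - 2 lam/(1+lam) e(Y)). Adding exp(-W) log(1+lam) times the
   second bound to the first cancels |Y|. Summing over v and using
   \<Sum>_v |I \<inter> N(v)| \<le> \<Delta> |I| bounds E|I|/|V| from below, and W = W(\<Delta> log(1+lam))
   turns this into the stated bound with \<delta>(f) = -2x^2/(f W(x)), x = \<Delta> log(1+lam). *)

section \<open>The Lambert W function\<close>

lemma mult_exp_strict_mono:
  fixes a b :: real
  assumes "0 \<le> a" "a < b"
  shows "a * exp a < b * exp b"
  using assms by (intro mult_strict_mono) auto

lemma lambertW_mult_exp:
  fixes w :: real
  assumes "0 \<le> w"
  shows "lambertW (w * exp w) = w"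
  unfolding lambertW_def
proof (rule the_equality)
  fix v assume v: "v \<ge> -1 \<and> v * exp v = w * exp w"
  have "0 \<le> v"
  proof (rule ccontr)
    assume "\<not> 0 \<le> v"
    then have "v * exp v < 0" by (simp add: mult_neg_pos)
    moreover have "0 \<le> w * exp w" using assms by simp
    ultimately show False using v by simp
  qed
  then show "v = w"
    using v assms mult_exp_strict_mono[of v w] mult_exp_strict_mono[of w v]
    by (cases v w rule: linorder_cases) auto
qed (use assms in simp)

lemma ex_mult_exp_eq:
  fixes x :: real
  assumes "0 \<le> x"
  obtains w where "0 \<le> w" "w * exp w = x"
proof -
  have "x * 1 \<le> x * exp x" using assms by (intro mult_left_mono) auto
  then have "\<exists>w. 0 \<le> w \<and> w \<le> x \<and> w * exp w = x"
    using assms by (intro IVT[of "\<lambda>w. w * exp w"]) (auto intro!: continuous_intros)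
  then show ?thesis using that by blast
qed

lemma lambertW_mult_exp_self:
  fixes x :: real
  assumes "0 \<le> x"
  shows "lambertW x * exp (lambertW x) = x"
proof -
  obtain w where w: "0 \<le> w" "w * exp w = x" using ex_mult_exp_eq assms .
  then show ?thesis using lambertW_mult_exp[OF w(1), unfolded w(2)] by simp
qed

lemma lambertW_pos:
  fixes x :: real
  assumes "0 < x"
  shows "0 < lambertW x"
proof -
  have "0 < lambertW x * exp (lambertW x)" using lambertW_mult_exp_self assms by simp
  then show ?thesis by (simp add: zero_less_mult_iff)
qed

lemma ln_one_plus_ge_divide:
  fixes x :: real
  assumes "-1 < x"
  shows "x / (1 + x) \<le> ln (1 + x)"
proof -
  have "ln (1 / (1 + x)) \<le> 1 / (1 + x) - 1" using assms by (intro ln_le_minus_one) auto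
  then show ?thesis using assms by (simp add: ln_div field_simps)
qed

lemma exp_ge_tangent:
  fixes a b :: real
  shows "exp b * (1 + a - b) \<le> exp a"
proof -
  have "exp b * (1 + (a - b)) \<le> exp b * exp (a - b)"
    by (intro mult_left_mono exp_ge_add_one_self) simp
  then show ?thesis by (simp add: exp_diff add_diff_eq)
qed

lemma simple_graph_finite: "simple_graph V E \<Longrightarrow> finite V"
  unfolding simple_graph_def by blast

lemma simple_graph_edge:
  assumes "simple_graph V E" "e \<in> E"
  obtains u w where "u \<noteq> w" "u \<in> V" "w \<in> V" "e = {u, w}"
  using assms unfolding simple_graph_def by blast

lemma simple_graph_no_loop: "simple_graph V E \<Longrightarrow> {v, v} \<notin> E"
  by (metis simple_graph_edge doubleton_eq_iff)

lemma neighbours_subset: "simple_graph V E \<Longrightarrow> neighbours E v \<subseteq> V"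
  unfolding neighbours_def by (auto elim!: simple_graph_edge simp: doubleton_eq_iff)

lemma mem_neighbours_commute: "u \<in> neighbours E v \<longleftrightarrow> v \<in> neighbours E u"
  unfolding neighbours_def by (simp add: insert_commute)

lemma finite_indep_sets: "finite V \<Longrightarrow> finite (indep_sets V E)"
  unfolding indep_sets_def by (rule finite_subset[of _ "Pow V"]) auto

lemma indep_sets_subset: "S \<in> indep_sets V E \<Longrightarrow> S \<subseteq> V"
  unfolding indep_sets_def by blast

lemma empty_in_indep_sets: "{} \<in> indep_sets V E"
  unfolding indep_sets_def by blast

lemma handshake_induced:
  assumes G: "simple_graph V E" and "Y \<subseteq> V"
  shows "(\<Sum>u\<in>Y. card (Y \<inter> neighbours E u)) = 2 * card {e\<in>E. e \<subseteq> Y}"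
proof -
  define P where "P = Sigma Y (\<lambda>u. Y \<inter> neighbours E u)"
  define EY where "EY = {e\<in>E. e \<subseteq> Y}"
  have finY: "finite Y" using assms simple_graph_finite finite_subset by blast
  have "(\<Sum>u\<in>Y. card (Y \<inter> neighbours E u)) = card P"
    using finY unfolding P_def by (simp add: card_SigmaI)
  also have "\<dots> = (\<Sum>e\<in>EY. card {p\<in>P. {fst p, snd p} = e})"
    unfolding card_eq_sum using finY
    by (intro sum.group[symmetric]) (auto simp: P_def EY_def neighbours_def insert_commute)
  also have "\<dots> = (\<Sum>e\<in>EY. 2)"
  proof (rule sum.cong[OF refl])
    fix e assume e: "e \<in> EY"
    then obtain a b where ab: "a \<noteq> b" "e = {a, b}"
      using G unfolding EY_def by (auto elim: simple_graph_edge)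
    then have "{p\<in>P. {fst p, snd p} = e} = {(a, b), (b, a)}"
      using e by (auto simp: P_def EY_def neighbours_def doubleton_eq_iff insert_commute)
    then show "card {p\<in>P. {fst p, snd p} = e} = 2" using ab by simp
  qed
  finally show ?thesis by (simp add: EY_def)
qed

section \<open>Occupancy in the hard-core model\<close>

(* Dividing by hardcore_Z V E lam gives Pr(v \<in> I), E|I| and the probability that v is
   uncovered, i.e. neither v nor a neighbour of v lies in I. *)

definition hardcore_occ_sum :: "'a set \<Rightarrow> 'a set set \<Rightarrow> real \<Rightarrow> 'a \<Rightarrow> real" where
  "hardcore_occ_sum V E lam v = (\<Sum>I\<in>{I\<in>indep_sets V E. v \<in> I}. lam ^ card I)"

definition hardcore_size_sum :: "'a set \<Rightarrow> 'a set set \<Rightarrow> real \<Rightarrow> real" where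
  "hardcore_size_sum V E lam = (\<Sum>I\<in>indep_sets V E. real (card I) * lam ^ card I)"

definition hardcore_uncovered_sum :: "'a set \<Rightarrow> 'a set set \<Rightarrow> real \<Rightarrow> 'a \<Rightarrow> real" where
  "hardcore_uncovered_sum V E lam v =
     (\<Sum>I\<in>{I\<in>indep_sets V E. v \<notin> I \<and> I \<inter> neighbours E v = {}}. lam ^ card I)"

lemma hardcore_occ_sum_eq_sum_if:
  "finite V \<Longrightarrow> hardcore_occ_sum V E lam v = (\<Sum>I\<in>indep_sets V E. if v \<in> I then lam ^ card I else 0)"
  unfolding hardcore_occ_sum_def by (simp add: finite_indep_sets sum.inter_filter)

lemma hardcore_size_sum_eq_sum_occ:
  assumes "finite V"
  shows "hardcore_size_sum V E lam = (\<Sum>v\<in>V. hardcore_occ_sum V E lam v)"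
proof -
  have "(\<Sum>v\<in>V. if v \<in> I then lam ^ card I else 0) = real (card I) * lam ^ card I"
    if "I \<in> indep_sets V E" for I
  proof -
    have "{v\<in>V. v \<in> I} = I" using indep_sets_subset[OF that] by blast
    then show ?thesis using sum.inter_filter[OF assms, of "\<lambda>_. lam ^ card I" "\<lambda>v. v \<in> I"] by simp
  qed
  then have "hardcore_size_sum V E lam
      = (\<Sum>I\<in>indep_sets V E. \<Sum>v\<in>V. if v \<in> I then lam ^ card I else 0)"
    unfolding hardcore_size_sum_def by simp
  also have "\<dots> = (\<Sum>v\<in>V. hardcore_occ_sum V E lam v)"
    using assms by (subst sum.swap) (simp add: hardcore_occ_sum_eq_sum_if)
  finally show ?thesis .
qed

lemma hardcore_Z_ge_one:
  fixes V :: "'a set"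
  assumes "finite V" "0 \<le> lam"
  shows "1 \<le> hardcore_Z V E lam"
proof -
  have "lam ^ card ({} :: 'a set) \<le> hardcore_Z V E lam"
    unfolding hardcore_Z_def using assms
    by (intro member_le_sum) (auto simp: empty_in_indep_sets finite_indep_sets)
  then show ?thesis by simp
qed

lemma hardcore_Z_le_power:
  assumes "finite V" "0 \<le> lam"
  shows "hardcore_Z V E lam \<le> (1 + lam) ^ card V"
proof -
  have "hardcore_Z V E lam \<le> (\<Sum>S\<in>Pow V. lam ^ card S)"
    unfolding hardcore_Z_def using assms
    by (intro sum_mono2) (auto simp: indep_sets_def)
  also have "\<dots> = (1 + lam) ^ card V"
    using prod_add[OF assms(1), of "\<lambda>_. lam" "\<lambda>_. 1"] by (simp add: add.commute)
  finally show ?thesis .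
qed

lemma hardcore_occ_sum_eq_uncovered:
  assumes "finite V" "v \<in> V" "{v, v} \<notin> E"
  shows "hardcore_occ_sum V E lam v = lam * hardcore_uncovered_sum V E lam v"
proof -
  let ?U = "{I\<in>indep_sets V E. v \<notin> I \<and> I \<inter> neighbours E v = {}}"
  have "lam * lam ^ card I = lam ^ card (insert v I)" if "I \<in> ?U" for I
    using that indep_sets_subset[of I V E] finite_subset[OF _ assms(1)] by auto
  then have "lam * hardcore_uncovered_sum V E lam v = (\<Sum>I\<in>?U. lam ^ card (insert v I))"
    unfolding hardcore_uncovered_sum_def sum_distrib_left by simp
  also have "\<dots> = hardcore_occ_sum V E lam v"
    unfolding hardcore_occ_sum_def
    by (rule sum.reindex_bij_witness[where i = "\<lambda>I. I - {v}" and j = "insert v"])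
       (use assms in \<open>auto simp: indep_sets_def neighbours_def insert_commute\<close>)
  finally show ?thesis by simp
qed

lemma hardcore_occ_uncovered_le_Z:
  assumes "finite V" "0 \<le> lam"
  shows "hardcore_occ_sum V E lam v + hardcore_uncovered_sum V E lam v \<le> hardcore_Z V E lam"
proof -
  have "hardcore_occ_sum V E lam v + hardcore_uncovered_sum V E lam v
      = (\<Sum>I\<in>{I\<in>indep_sets V E. v \<in> I} \<union> {I\<in>indep_sets V E. v \<notin> I \<and> I \<inter> neighbours E v = {}}. lam ^ card I)"
    unfolding hardcore_occ_sum_def hardcore_uncovered_sum_def using assms(1)
    by (intro sum.union_disjoint[symmetric]) (auto simp: finite_indep_sets)
  also have "\<dots> \<le> hardcore_Z V E lam"
    unfolding hardcore_Z_def using assms by (intro sum_mono2 finite_indep_sets) auto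
  finally show ?thesis .
qed

lemma hardcore_Z_le_occ_uncovered_nbrs:
  assumes "finite V" "0 \<le> lam"
  shows "hardcore_Z V E lam \<le> hardcore_occ_sum V E lam v + hardcore_uncovered_sum V E lam v
           + (\<Sum>w\<in>V \<inter> neighbours E v. hardcore_occ_sum V E lam w)"
proof -
  let ?occ = "\<lambda>w I. if w \<in> I then lam ^ card I else 0"
  let ?unc = "\<lambda>I. if v \<notin> I \<and> I \<inter> neighbours E v = {} then lam ^ card I else (0::real)"
  have "lam ^ card I \<le> ?occ v I + ?unc I + (\<Sum>w\<in>V \<inter> neighbours E v. ?occ w I)"
    if "I \<in> indep_sets V E" for I
  proof -
    have nonneg: "0 \<le> ?occ v I" "0 \<le> ?unc I" "0 \<le> (\<Sum>w\<in>V \<inter> neighbours E v. ?occ w I)"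
      using assms(2) by (auto intro: sum_nonneg)
    consider "v \<in> I" | "v \<notin> I" "I \<inter> neighbours E v = {}" | w where "w \<in> I" "w \<in> neighbours E v"
      by blast
    then show ?thesis
    proof cases
      case 3
      then have "w \<in> V \<inter> neighbours E v" using indep_sets_subset[OF that] by blast
      then have "?occ w I \<le> (\<Sum>w\<in>V \<inter> neighbours E v. ?occ w I)"
        using assms by (intro member_le_sum) auto
      with 3 nonneg show ?thesis by simp
    qed (use nonneg in auto)
  qed
  then have "hardcore_Z V E lam
      \<le> (\<Sum>I\<in>indep_sets V E. ?occ v I + ?unc I + (\<Sum>w\<in>V \<inter> neighbours E v. ?occ w I))"
    unfolding hardcore_Z_def by (rule sum_mono)
  also have "\<dots> = hardcore_occ_sum V E lam v + hardcore_uncovered_sum V E lam v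
           + (\<Sum>w\<in>V \<inter> neighbours E v. hardcore_occ_sum V E lam w)"
    using assms(1)
    by (simp add: sum.distrib sum.swap[of _ "V \<inter> _"] hardcore_occ_sum_eq_sum_if
        hardcore_uncovered_sum_def finite_indep_sets sum.inter_filter)
  finally show ?thesis .
qed

lemma hardcore_occ_sum_le:
  assumes "finite V" "v \<in> V" "{v, v} \<notin> E" "0 < lam"
  shows "hardcore_occ_sum V E lam v \<le> lam / (1 + lam) * hardcore_Z V E lam"
proof -
  have "(1 + lam) * hardcore_occ_sum V E lam v
      = lam * (hardcore_occ_sum V E lam v + hardcore_uncovered_sum V E lam v)"
    using hardcore_occ_sum_eq_uncovered[OF assms(1-3)] by (simp add: algebra_simps)
  also have "\<dots> \<le> lam * hardcore_Z V E lam"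
    using hardcore_occ_uncovered_le_Z[OF assms(1)] assms(4) by (intro mult_left_mono) auto
  finally show ?thesis using assms(4) by (simp add: field_simps)
qed

lemma hardcore_occ_sum_ge:
  assumes "finite V" "v \<in> V" "{v, v} \<notin> E" "0 < lam"
  shows "lam / (1 + lam) * (hardcore_Z V E lam - (\<Sum>w\<in>V \<inter> neighbours E v. hardcore_occ_sum V E lam w))
           \<le> hardcore_occ_sum V E lam v"
proof -
  have "lam * (hardcore_Z V E lam - (\<Sum>w\<in>V \<inter> neighbours E v. hardcore_occ_sum V E lam w))
      \<le> lam * (hardcore_occ_sum V E lam v + hardcore_uncovered_sum V E lam v)"
    using hardcore_Z_le_occ_uncovered_nbrs[OF assms(1)] assms(4)
    by (intro mult_left_mono) (auto simp: algebra_simps)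
  also have "\<dots> = (1 + lam) * hardcore_occ_sum V E lam v"
    using hardcore_occ_sum_eq_uncovered[OF assms(1-3)] by (simp add: algebra_simps)
  finally show ?thesis using assms(4) by (simp add: field_simps)
qed

lemma hardcore_size_sum_ge:
  assumes G: "simple_graph V E" and Y: "Y \<subseteq> V" and lam: "0 < lam"
  defines "A \<equiv> lam / (1 + lam)"
  shows "A * (real (card Y) - 2 * A * real (card {e\<in>E. e \<subseteq> Y})) * hardcore_Z Y E lam
           \<le> hardcore_size_sum Y E lam"
proof -
  let ?Z = "hardcore_Z Y E lam" and ?occ = "hardcore_occ_sum Y E lam"
  let ?d = "\<lambda>u. real (card (Y \<inter> neighbours E u))"
  have finY: "finite Y" using G Y simple_graph_finite finite_subset by blast
  have A: "0 \<le> A" using lam by (simp add: A_def)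
  have occ_le: "?occ w \<le> A * ?Z" if "w \<in> Y" for w
    unfolding A_def using hardcore_occ_sum_le[OF finY that simple_graph_no_loop[OF G] lam] .
  have occ_ge: "A * (?Z - ?d u * (A * ?Z)) \<le> ?occ u" if "u \<in> Y" for u
  proof -
    have "(\<Sum>w\<in>Y \<inter> neighbours E u. ?occ w) \<le> ?d u * (A * ?Z)"
      using occ_le by (intro sum_bounded_above) auto
    then have "A * (?Z - ?d u * (A * ?Z)) \<le> A * (?Z - (\<Sum>w\<in>Y \<inter> neighbours E u. ?occ w))"
      using A by (intro mult_left_mono) auto
    also have "\<dots> \<le> ?occ u"
      unfolding A_def using hardcore_occ_sum_ge[OF finY that simple_graph_no_loop[OF G] lam] .
    finally show ?thesis .
  qed
  have "(\<Sum>u\<in>Y. ?d u) = 2 * real (card {e\<in>E. e \<subseteq> Y})"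
    using handshake_induced[OF G Y] by (metis of_nat_mult of_nat_numeral of_nat_sum)
  moreover have "(\<Sum>u\<in>Y. A * (?Z - ?d u * (A * ?Z)))
      = real (card Y) * (A * ?Z) - (A * A * ?Z) * (\<Sum>u\<in>Y. ?d u)"
    by (simp add: sum_subtractf sum_distrib_left algebra_simps)
  ultimately have "A * (real (card Y) - 2 * A * real (card {e\<in>E. e \<subseteq> Y})) * ?Z
      = (\<Sum>u\<in>Y. A * (?Z - ?d u * (A * ?Z)))"
    by (simp add: algebra_simps)
  also have "\<dots> \<le> (\<Sum>u\<in>Y. ?occ u)" using occ_ge by (rule sum_mono)
  also have "\<dots> = hardcore_size_sum Y E lam" using hardcore_size_sum_eq_sum_occ[OF finY] by simp
  finally show ?thesis .
qed

(* The weight k makes the |Y| log(1+lam) term of the tangent bound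
   1/Z_Y \<ge> exp(-W) (1 + W - |Y| log(1+lam)) cancel against the |Y| term of
   hardcore_size_sum_ge. *)
lemma hardcore_local_bound:
  fixes W M :: real
  assumes G: "simple_graph V E" and Y: "Y \<subseteq> V" and lam: "0 < lam"
    and M: "real (card {e\<in>E. e \<subseteq> Y}) \<le> M"
  defines "A \<equiv> lam / (1 + lam)" and "k \<equiv> exp (- W) * ln (1 + lam)"
  shows "(A * exp (- W) * (1 + W) - 2 * k * A\<^sup>2 * M) * hardcore_Z Y E lam
           \<le> A + k * hardcore_size_sum Y E lam"
proof -
  let ?Z = "hardcore_Z Y E lam" and ?y = "real (card Y)" and ?L = "ln (1 + lam)"
  have finY: "finite Y" using G Y simple_graph_finite finite_subset by blast
  have A: "0 \<le> A" and k: "0 \<le> k" using lam by (simp_all add: A_def k_def)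
  have Z: "1 \<le> ?Z" using lam by (intro hardcore_Z_ge_one[OF finY]) simp
  have "exp (- W) * (1 + W - ?y * ?L) \<le> exp (- (?y * ?L))"
    using exp_ge_tangent[where a = "- (?y * ?L)" and b = "- W"] by (simp add: algebra_simps)
  then have "exp (- W) * (1 + W - ?y * ?L) * ?Z \<le> exp (- (?y * ?L)) * ?Z"
    using Z by (intro mult_right_mono) auto
  also have "\<dots> \<le> exp (- (?y * ?L)) * exp (?y * ?L)"
    using hardcore_Z_le_power[OF finY, of lam E] lam by (simp add: exp_of_nat_mult)
  finally have tangent: "exp (- W) * (1 + W - ?y * ?L) * ?Z \<le> 1"
    by (simp add: exp_minus field_simps)
  have "A * (?y - 2 * A * M) * ?Z \<le> A * (?y - 2 * A * real (card {e\<in>E. e \<subseteq> Y})) * ?Z"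
    using A M Z by (intro mult_right_mono mult_left_mono) (auto intro: mult_left_mono)
  also have "\<dots> \<le> hardcore_size_sum Y E lam"
    unfolding A_def by (rule hardcore_size_sum_ge[OF G Y lam])
  finally have size: "A * (?y - 2 * A * M) * ?Z \<le> hardcore_size_sum Y E lam" .
  have "(A * exp (- W) * (1 + W) - 2 * k * A\<^sup>2 * M) * ?Z
      = A * (exp (- W) * (1 + W - ?y * ?L) * ?Z) + k * (A * (?y - 2 * A * M) * ?Z)"
    by (simp add: k_def algebra_simps power2_eq_square)
  also have "\<dots> \<le> A * 1 + k * hardcore_size_sum Y E lam"
    using tangent size A k by (intro add_mono mult_left_mono) auto
  finally show ?thesis by simp
qed

section \<open>Splitting off a neighbourhood\<close>

definition outer_indep_sets :: "'a set \<Rightarrow> 'a set set \<Rightarrow> 'a \<Rightarrow> 'a set set" where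
  "outer_indep_sets V E v = {T\<in>indep_sets V E. T \<inter> neighbours E v = {}}"

definition uncovered_nbrs :: "'a set set \<Rightarrow> 'a \<Rightarrow> 'a set \<Rightarrow> 'a set" where
  "uncovered_nbrs E v T = {u\<in>neighbours E v. \<forall>t\<in>T. {t, u} \<notin> E}"

lemma uncovered_nbrs_subset: "simple_graph V E \<Longrightarrow> uncovered_nbrs E v T \<subseteq> V"
  unfolding uncovered_nbrs_def using neighbours_subset[of V E v] by blast

lemma union_in_indep_sets:
  assumes G: "simple_graph V E"
    and T: "T \<in> outer_indep_sets V E v" and S: "S \<in> indep_sets (uncovered_nbrs E v T) E"
  shows "T \<union> S \<in> indep_sets V E"
proof -
  have cross: "{a, b} \<notin> E" "{b, a} \<notin> E" if "a \<in> T" "b \<in> S" for a b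
  proof -
    have "b \<in> uncovered_nbrs E v T" using that indep_sets_subset[OF S] by blast
    then show "{a, b} \<notin> E" using that(1) by (simp add: uncovered_nbrs_def)
    then show "{b, a} \<notin> E" by (simp add: insert_commute)
  qed
  have "S \<subseteq> V" using indep_sets_subset[OF S] uncovered_nbrs_subset[OF G] by blast
  with T S cross show ?thesis
    unfolding outer_indep_sets_def indep_sets_def by blast
qed

lemma outer_union_split:
  assumes G: "simple_graph V E"
    and T: "T \<in> outer_indep_sets V E v" and S: "S \<in> indep_sets (uncovered_nbrs E v T) E"
  shows "card (T \<union> S) = card T + card S" and "(T \<union> S) \<inter> neighbours E v = S"
    and "(T \<union> S) - neighbours E v = T"
proof -
  have TN: "T \<inter> neighbours E v = {}" and SN: "S \<subseteq> neighbours E v"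
    using T indep_sets_subset[OF S] by (auto simp: outer_indep_sets_def uncovered_nbrs_def)
  have "finite (T \<union> S)"
    using union_in_indep_sets[OF G T S] simple_graph_finite[OF G] indep_sets_subset finite_subset
    by metis
  then show "card (T \<union> S) = card T + card S" using TN SN by (intro card_Un_disjoint) auto
  show "(T \<union> S) \<inter> neighbours E v = S" "(T \<union> S) - neighbours E v = T" using TN SN by blast+
qed

lemma sum_indep_sets_split_nbhd:
  assumes G: "simple_graph V E"
  shows "(\<Sum>I\<in>indep_sets V E. F I)
       = (\<Sum>T\<in>outer_indep_sets V E v. \<Sum>S\<in>indep_sets (uncovered_nbrs E v T) E. F (T \<union> S))"
proof -
  let ?N = "neighbours E v" and ?U = "uncovered_nbrs E v"
  have fin: "finite (outer_indep_sets V E v)" "finite (indep_sets (?U T) E)" for T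
    using simple_graph_finite[OF G] finite_subset[OF uncovered_nbrs_subset[OF G]]
    by (simp_all add: outer_indep_sets_def finite_indep_sets)
  have "(\<Sum>T\<in>outer_indep_sets V E v. \<Sum>S\<in>indep_sets (?U T) E. F (T \<union> S))
      = (\<Sum>(T, S)\<in>Sigma (outer_indep_sets V E v) (\<lambda>T. indep_sets (?U T) E). F (T \<union> S))"
    using fin by (intro sum.Sigma) auto
  also have "\<dots> = (\<Sum>I\<in>indep_sets V E. F I)"
  proof (rule sum.reindex_bij_witness[where i = "\<lambda>I. (I - ?N, I \<inter> ?N)" and j = "\<lambda>(T, S). T \<union> S"])
    fix p assume p: "p \<in> Sigma (outer_indep_sets V E v) (\<lambda>T. indep_sets (?U T) E)"
    then obtain T S where TS: "p = (T, S)" "T \<in> outer_indep_sets V E v" "S \<in> indep_sets (?U T) E"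
      by blast
    show "((case p of (T, S) \<Rightarrow> T \<union> S) - ?N, (case p of (T, S) \<Rightarrow> T \<union> S) \<inter> ?N) = p"
      using outer_union_split(2,3)[OF G TS(2,3)] TS(1) by simp
    show "(case p of (T, S) \<Rightarrow> T \<union> S) \<in> indep_sets V E"
      using union_in_indep_sets[OF G TS(2,3)] TS(1) by simp
  next
    fix I assume I: "I \<in> indep_sets V E"
    show "(case (I - ?N, I \<inter> ?N) of (T, S) \<Rightarrow> T \<union> S) = I" by auto
    show "(I - ?N, I \<inter> ?N) \<in> Sigma (outer_indep_sets V E v) (\<lambda>T. indep_sets (?U T) E)"
      using I unfolding outer_indep_sets_def indep_sets_def uncovered_nbrs_def by auto
  qed auto
  finally show ?thesis ..
qed

lemma hardcore_Z_split_nbhd: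
  assumes G: "simple_graph V E"
  shows "hardcore_Z V E lam
       = (\<Sum>T\<in>outer_indep_sets V E v. lam ^ card T * hardcore_Z (uncovered_nbrs E v T) E lam)"
proof -
  have "hardcore_Z V E lam
      = (\<Sum>T\<in>outer_indep_sets V E v. \<Sum>S\<in>indep_sets (uncovered_nbrs E v T) E. lam ^ card (T \<union> S))"
    unfolding hardcore_Z_def by (rule sum_indep_sets_split_nbhd[OF G])
  also have "\<dots> = (\<Sum>T\<in>outer_indep_sets V E v. lam ^ card T * hardcore_Z (uncovered_nbrs E v T) E lam)"
    unfolding hardcore_Z_def sum_distrib_left
    by (intro sum.cong refl) (simp add: outer_union_split(1)[OF G] power_add)
  finally show ?thesis .
qed

lemma hardcore_nbhd_size_split:
  assumes G: "simple_graph V E"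
  shows "(\<Sum>I\<in>indep_sets V E. real (card (I \<inter> neighbours E v)) * lam ^ card I)
       = (\<Sum>T\<in>outer_indep_sets V E v. lam ^ card T * hardcore_size_sum (uncovered_nbrs E v T) E lam)"
proof -
  have "(\<Sum>I\<in>indep_sets V E. real (card (I \<inter> neighbours E v)) * lam ^ card I)
      = (\<Sum>T\<in>outer_indep_sets V E v. \<Sum>S\<in>indep_sets (uncovered_nbrs E v T) E.
           real (card ((T \<union> S) \<inter> neighbours E v)) * lam ^ card (T \<union> S))"
    by (rule sum_indep_sets_split_nbhd[OF G])
  also have "\<dots> = (\<Sum>T\<in>outer_indep_sets V E v. lam ^ card T * hardcore_size_sum (uncovered_nbrs E v T) E lam)"
    unfolding hardcore_size_sum_def sum_distrib_left
    by (intro sum.cong refl) (simp add: outer_union_split[OF G] power_add)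
  finally show ?thesis .
qed

lemma hardcore_occ_sum_split_nbhd:
  assumes G: "simple_graph V E" and v: "v \<in> V" and lam: "0 < lam"
  shows "hardcore_occ_sum V E lam v = lam / (1 + lam) * (\<Sum>T\<in>outer_indep_sets V E v. lam ^ card T)"
proof -
  have finV: "finite V" using simple_graph_finite[OF G] .
  have "outer_indep_sets V E v
      = {I\<in>indep_sets V E. v \<in> I} \<union> {I\<in>indep_sets V E. v \<notin> I \<and> I \<inter> neighbours E v = {}}"
    unfolding outer_indep_sets_def indep_sets_def neighbours_def by blast
  then have "(\<Sum>T\<in>outer_indep_sets V E v. lam ^ card T)
      = hardcore_occ_sum V E lam v + hardcore_uncovered_sum V E lam v"
    unfolding hardcore_occ_sum_def hardcore_uncovered_sum_def
    by (simp add: sum.union_disjoint finite_indep_sets[OF finV] disjoint_iff)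
  then show ?thesis
    using hardcore_occ_sum_eq_uncovered[OF finV v simple_graph_no_loop[OF G]] lam
    by (simp add: field_simps)
qed

lemma hardcore_vertex_bound:
  fixes W M :: real
  assumes G: "simple_graph V E" and v: "v \<in> V" and lam: "0 < lam"
    and M: "real (nbhd_edges E v) \<le> M"
  defines "A \<equiv> lam / (1 + lam)" and "k \<equiv> exp (- W) * ln (1 + lam)"
  shows "(A * exp (- W) * (1 + W) - 2 * k * A\<^sup>2 * M) * hardcore_Z V E lam
           \<le> hardcore_occ_sum V E lam v
             + k * (\<Sum>I\<in>indep_sets V E. real (card (I \<inter> neighbours E v)) * lam ^ card I)"
proof -
  let ?c = "A * exp (- W) * (1 + W) - 2 * k * A\<^sup>2 * M" and ?U = "uncovered_nbrs E v"
  have local: "?c * hardcore_Z (?U T) E lam \<le> A + k * hardcore_size_sum (?U T) E lam" for T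
  proof -
    have finN: "finite (neighbours E v)"
      using neighbours_subset[OF G] simple_graph_finite[OF G] by (rule finite_subset)
    have "card {e\<in>E. e \<subseteq> ?U T} \<le> nbhd_edges E v"
      unfolding nbhd_edges_def using finN
      by (intro card_mono) (auto simp: uncovered_nbrs_def intro: finite_subset[of _ "Pow (neighbours E v)"])
    then show ?thesis
      unfolding A_def k_def using M
      by (intro hardcore_local_bound[OF G uncovered_nbrs_subset[OF G] lam]) simp
  qed
  have "?c * hardcore_Z V E lam = (\<Sum>T\<in>outer_indep_sets V E v. lam ^ card T * (?c * hardcore_Z (?U T) E lam))"
    by (simp add: hardcore_Z_split_nbhd[OF G, of lam v] sum_distrib_left mult.left_commute)
  also have "\<dots> \<le> (\<Sum>T\<in>outer_indep_sets V E v. lam ^ card T * (A + k * hardcore_size_sum (?U T) E lam))"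
    using local lam by (intro sum_mono mult_left_mono) auto
  also have "\<dots> = A * (\<Sum>T\<in>outer_indep_sets V E v. lam ^ card T)
      + k * (\<Sum>T\<in>outer_indep_sets V E v. lam ^ card T * hardcore_size_sum (?U T) E lam)"
    by (simp add: sum.distrib sum_distrib_left algebra_simps)
  also have "\<dots> = hardcore_occ_sum V E lam v
             + k * (\<Sum>I\<in>indep_sets V E. real (card (I \<inter> neighbours E v)) * lam ^ card I)"
    unfolding hardcore_occ_sum_split_nbhd[OF G v lam] hardcore_nbhd_size_split[OF G] A_def ..
  finally show ?thesis .
qed

lemma sum_card_inter_neighbours:
  assumes G: "simple_graph V E" and I: "I \<subseteq> V"
  shows "(\<Sum>v\<in>V. card (I \<inter> neighbours E v)) = (\<Sum>u\<in>I. degree E u)"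
proof -
  have finV: "finite V" and finI: "finite I"
    using simple_graph_finite[OF G] I finite_subset by blast+
  have "(\<Sum>v\<in>V. card (I \<inter> neighbours E v)) = (\<Sum>v\<in>V. \<Sum>u\<in>I. if v \<in> neighbours E u then 1 else 0)"
    using finI by (simp add: sum.If_cases Int_def mem_neighbours_commute)
  also have "\<dots> = (\<Sum>u\<in>I. \<Sum>v\<in>V. if v \<in> neighbours E u then 1 else 0)" by (rule sum.swap)
  also have "\<dots> = (\<Sum>u\<in>I. degree E u)"
  proof -
    have "{v\<in>V. v \<in> neighbours E u} = neighbours E u" for u using neighbours_subset[OF G] by blast
    then show ?thesis using finV by (simp add: sum.If_cases degree_def Int_def)
  qed
  finally show ?thesis .
qed

lemma hardcore_expected_size_eq: "hardcore_expected_size V E lam = hardcore_size_sum V E lam / hardcore_Z V E lam"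
  unfolding hardcore_expected_size_def hardcore_size_sum_def by (simp add: sum_divide_distrib)

lemma hardcore_expected_size_ge:
  fixes W \<Delta> M :: real
  assumes G: "simple_graph V E" and V: "V \<noteq> {}" and lam: "0 < lam"
    and deg: "\<forall>v\<in>V. real (degree E v) \<le> \<Delta>" and M: "\<forall>v\<in>V. real (nbhd_edges E v) \<le> M"
  defines "A \<equiv> lam / (1 + lam)" and "k \<equiv> exp (- W) * ln (1 + lam)"
  shows "(A * exp (- W) * (1 + W) - 2 * k * A\<^sup>2 * M) / (1 + k * \<Delta>)
           \<le> hardcore_expected_size V E lam / real (card V)"
proof -
  let ?c = "A * exp (- W) * (1 + W) - 2 * k * A\<^sup>2 * M"
  let ?Z = "hardcore_Z V E lam" and ?S = "hardcore_size_sum V E lam"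
  let ?nb = "\<lambda>v. \<Sum>I\<in>indep_sets V E. real (card (I \<inter> neighbours E v)) * lam ^ card I"
  have finV: "finite V" using simple_graph_finite[OF G] .
  have k: "0 \<le> k" using lam by (simp add: k_def)
  have \<Delta>: "0 \<le> \<Delta>" using deg V by force
  have Z: "1 \<le> ?Z" using lam by (intro hardcore_Z_ge_one[OF finV]) simp
  have n: "0 < real (card V)" using finV V by (simp add: card_gt_0_iff)
  have "(\<Sum>v\<in>V. ?nb v)
      = (\<Sum>I\<in>indep_sets V E. lam ^ card I * (\<Sum>v\<in>V. real (card (I \<inter> neighbours E v))))"
    by (subst sum.swap) (simp add: sum_distrib_left mult.commute)
  also have "\<dots> = (\<Sum>I\<in>indep_sets V E. lam ^ card I * real (\<Sum>u\<in>I. degree E u))"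
    by (intro sum.cong refl)
       (simp add: sum_card_inter_neighbours[OF G] indep_sets_subset flip: of_nat_sum)
  also have "\<dots> \<le> (\<Sum>I\<in>indep_sets V E. lam ^ card I * (real (card I) * \<Delta>))"
  proof (intro sum_mono mult_left_mono)
    fix I assume "I \<in> indep_sets V E"
    then show "real (\<Sum>u\<in>I. degree E u) \<le> real (card I) * \<Delta>"
      using deg indep_sets_subset[of I V E] unfolding of_nat_sum by (intro sum_bounded_above) auto
  qed (use lam in simp)
  also have "\<dots> = \<Delta> * ?S"
    by (simp add: hardcore_size_sum_def sum_distrib_left algebra_simps)
  finally have nb: "(\<Sum>v\<in>V. ?nb v) \<le> \<Delta> * ?S" .
  have "real (card V) * (?c * ?Z) = (\<Sum>v\<in>V. ?c * ?Z)" by simp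
  also have "\<dots> \<le> (\<Sum>v\<in>V. hardcore_occ_sum V E lam v + k * ?nb v)"
    using M unfolding A_def k_def by (intro sum_mono hardcore_vertex_bound[OF G _ lam]) auto
  also have "\<dots> = ?S + k * (\<Sum>v\<in>V. ?nb v)"
    by (simp add: sum.distrib sum_distrib_left hardcore_size_sum_eq_sum_occ[OF finV])
  also have "\<dots> \<le> (1 + k * \<Delta>) * ?S"
    using mult_left_mono[OF nb k] by (simp add: algebra_simps)
  finally have "?c * (real (card V) * ?Z) \<le> (1 + k * \<Delta>) * ?S" by (simp add: mult_ac)
  then have "?c \<le> (1 + k * \<Delta>) * ?S / (real (card V) * ?Z)"
    using n Z by (simp add: pos_le_divide_eq)
  moreover have "0 < 1 + k * \<Delta>" using k \<Delta> by (simp add: add_pos_nonneg)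
  ultimately have "?c / (1 + k * \<Delta>) \<le> ?S / (real (card V) * ?Z)"
    by (simp add: pos_divide_le_eq mult.commute)
  then show ?thesis by (simp add: hardcore_expected_size_eq mult.commute)
qed

lemma hardcore_expected_size_ge_lambertW:
  fixes \<Delta> f :: real
  assumes G: "simple_graph V E" and V: "V \<noteq> {}" and lam: "0 < lam" and \<Delta>: "0 < \<Delta>"
    and deg: "\<forall>v\<in>V. real (degree E v) \<le> \<Delta>" and nbhd: "\<forall>v\<in>V. real (nbhd_edges E v) \<le> \<Delta>\<^sup>2 / f"
  defines "x \<equiv> \<Delta> * ln (1 + lam)"
  shows "(1 - 2 * x\<^sup>2 / (f * lambertW x)) * (lam / (1 + lam)) * (lambertW x / x)
           \<le> hardcore_expected_size V E lam / real (card V)"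
proof -
  define W where "W = lambertW x"
  define A where "A = lam / (1 + lam)"
  define L where "L = ln (1 + lam)"
  define M where "M = \<Delta>\<^sup>2 / f"
  have L: "0 < L" and A: "0 \<le> A" "A \<le> L"
    using lam ln_one_plus_ge_divide[of lam] by (simp_all add: L_def A_def)
  have x: "0 < x" using \<Delta> L by (simp add: x_def L_def)
  have W: "0 < W" and expW: "exp (- W) = W / x"
    using lambertW_pos[OF x] lambertW_mult_exp_self[of x] x
    by (simp_all add: W_def exp_minus field_simps)
  have M: "0 \<le> M" using nbhd V unfolding M_def by (meson all_not_in_conv of_nat_0_le_iff order_trans)
  have kL: "exp (- W) * L = W / \<Delta>" unfolding expW using \<Delta> L by (simp add: x_def L_def field_simps)
  have "2 * x\<^sup>2 / (f * W) * (A * (W / x)) = 2 * A * M / \<Delta> * L"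
    using x W \<Delta> by (cases "f = 0") (simp_all add: M_def x_def L_def field_simps power2_eq_square)
  then have "(1 - 2 * x\<^sup>2 / (f * W)) * A * (W / x) = A * exp (- W) - 2 * A * M / \<Delta> * L"
    by (simp add: expW algebra_simps)
  also have "\<dots> \<le> A * exp (- W) - 2 * A * M / \<Delta> * (A * W / (1 + W))"
  proof -
    have "A * W \<le> L * W" using A(2) W by (intro mult_right_mono) auto
    then have "A * W \<le> L * (1 + W)" using A by (simp add: algebra_simps)
    then show ?thesis using A M W \<Delta> by (intro diff_left_mono mult_left_mono) (simp_all add: field_simps)
  qed
  also have "\<dots> = (A * exp (- W) * (1 + W) - 2 * (exp (- W) * L) * A\<^sup>2 * M) / (1 + exp (- W) * L * \<Delta>)"
  proof -
    have "W / \<Delta> * \<Delta> = W" using \<Delta> by simp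
    moreover have "A * exp (- W) * (1 + W) / (1 + W) = A * exp (- W)" using W by simp
    moreover have "2 * (W / \<Delta>) * A\<^sup>2 * M / (1 + W) = 2 * A * M / \<Delta> * (A * W / (1 + W))"
      by (simp add: power2_eq_square mult_ac)
    ultimately show ?thesis unfolding kL diff_divide_distrib by (simp only:)
  qed
  also have "\<dots> \<le> hardcore_expected_size V E lam / real (card V)"
    using hardcore_expected_size_ge[OF G V lam deg] nbhd unfolding A_def L_def M_def by blast
  finally show ?thesis by (simp add: W_def A_def)
qed

theorem theorem2p1:
  fixes D :: "real \<Rightarrow> nat" and lam :: "real \<Rightarrow> real"
  assumes D_pos: "\<forall>f. D f > 0"
    and lam_pos: "\<forall>f. lam f > 0"
    and f_le: "\<forall>f. f \<le> (real (D f))\<^sup>2 + 1"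
    and lim1: "filterlim (\<lambda>f. real (D f) * ln (1 + lam f)) at_top at_top"
    and lim2: "((\<lambda>f. 2 * (real (D f) * ln (1 + lam f))\<^sup>2
                   / (f * lambertW (real (D f) * ln (1 + lam f)))) \<longlongrightarrow> 0) at_top"
  shows "\<exists>\<delta> :: real \<Rightarrow> real. (\<delta> \<longlongrightarrow> 0) at_top \<and>
    (\<forall>f (V :: nat set) E. simple_graph V E \<and> V \<noteq> {} \<and>
        (\<forall>v\<in>V. degree E v \<le> D f) \<and>
        (\<forall>v\<in>V. real (nbhd_edges E v) \<le> (real (D f))\<^sup>2 / f) \<longrightarrow>
      hardcore_expected_size V E (lam f) / real (card V)
        \<ge> (1 + \<delta> f) * (lam f / (1 + lam f))
           * (lambertW (real (D f) * ln (1 + lam f)) / (real (D f) * ln (1 + lam f))))"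
proof -
  (* The bound holds for each f separately. *)
  define \<delta> where "\<delta> f = - (2 * (real (D f) * ln (1 + lam f))\<^sup>2
                   / (f * lambertW (real (D f) * ln (1 + lam f))))" for f
  have "(\<delta> \<longlongrightarrow> 0) at_top" unfolding \<delta>_def using tendsto_minus[OF lim2] by simp
  moreover have "(1 + \<delta> f) * (lam f / (1 + lam f))
           * (lambertW (real (D f) * ln (1 + lam f)) / (real (D f) * ln (1 + lam f)))
         \<le> hardcore_expected_size V E (lam f) / real (card V)"
    if "simple_graph V E" "V \<noteq> {}" "\<forall>v\<in>V. degree E v \<le> D f"
      "\<forall>v\<in>V. real (nbhd_edges E v) \<le> (real (D f))\<^sup>2 / f" for f and V :: "nat set" and E
    using hardcore_expected_size_ge_lambertW[OF that(1,2), of "lam f" "real (D f)" f] that(3,4)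
      D_pos lam_pos by (simp add: \<delta>_def)
  ultimately show ?thesis by blast
qed

end
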